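(* Let $\Bbbk$ be a field. A quantum graded algebra with a straightening law $A$ on a finite poset $(\Pi,<_{\rm st})$ is noetherian and satisfies polynomial growth (PG).
   Context: Quantum graded A.S.L.: an $\mathbb N$-graded $\Bbbk$-algebra $A$ with a finite subset $\Pi$ partially ordered by $<_{\rm st}$ such that (1) elements of $\Pi$ are homogeneous of positive degree; (2) $\Pi$ generates $A$; (3) standard monomials ($1$ and $\alpha_1\cdots\alpha_s$, $\alpha_i\in\Pi$, $\alpha_1\le_{\rm st}\dots\le_{\rm st}\alpha_s$) are linearly independent; (4) for incomparable $\alpha,\beta\in\Pi$, $\alpha\beta$ is a linear combination of terms $\lambda$ or $\lambda\mu$, $\lambda,\mu\in\Pi$, $\lambda\le_{\rm st}\mu$, $\lambda<_{\rm st}\alpha,\beta$; (5) for all $\alpha,\beta\in\Pi$ there is $c\in\Bbbk^\ast$ with $\alpha\beta-c\beta\alpha$ a linear combination of such terms. Polynomial growth (PG), in the sense of Levasseur: there exist $c>0$ and $d\in\mathbb N$ such that $\dim_\Bbbk A_n\le cn^d$ for all $n\ge1$. *)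

theory Defs
  imports Complex_Main
begin

definition k_algebra :: "('k::field \<Rightarrow> 'a::ring_1 \<Rightarrow> 'a) \<Rightarrow> bool" where
  "k_algebra sc \<longleftrightarrow> Vector_Spaces.vector_space sc \<and>
     (\<forall>c x y. sc c (x * y) = sc c x * y \<and> sc c (x * y) = x * sc c y)"

text \<open>N-graded k-algebra: A is the direct sum of the subspaces Agr n,
  with 1 in degree 0 and Agr i * Agr j contained in Agr (i+j).\<close>
definition graded_k_algebra ::
  "('k::field \<Rightarrow> 'a::ring_1 \<Rightarrow> 'a) \<Rightarrow> (nat \<Rightarrow> 'a set) \<Rightarrow> bool" where
  "graded_k_algebra sc Agr \<longleftrightarrow> k_algebra sc \<and>
     (\<forall>n. module.subspace sc (Agr n)) \<and>
     module.span sc (\<Union>n. Agr n) = UNIV \<and>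
     (\<forall>N f. (\<forall>i\<le>N. f i \<in> Agr i) \<and> (\<Sum>i\<le>N. f i) = 0 \<longrightarrow> (\<forall>i\<le>N. f i = 0)) \<and>
     1 \<in> Agr 0 \<and>
     (\<forall>i j x y. x \<in> Agr i \<and> y \<in> Agr j \<longrightarrow> x * y \<in> Agr (i + j))"

definition std_words :: "'a set \<Rightarrow> ('a \<Rightarrow> 'a \<Rightarrow> bool) \<Rightarrow> 'a list set" where
  "std_words Pi lst = {xs. set xs \<subseteq> Pi \<and> sorted_wrt (\<lambda>a b. lst a b \<or> a = b) xs}"

definition lower_terms :: "'a::ring_1 set \<Rightarrow> ('a \<Rightarrow> 'a \<Rightarrow> bool) \<Rightarrow> 'a \<Rightarrow> 'a \<Rightarrow> 'a set" where
  "lower_terms Pi lst \<alpha> \<beta> =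
     {l. l \<in> Pi \<and> lst l \<alpha> \<and> lst l \<beta>} \<union>
     {l * m | l m. l \<in> Pi \<and> m \<in> Pi \<and> (lst l m \<or> l = m) \<and> lst l \<alpha> \<and> lst l \<beta>}"

definition quantum_graded_ASL ::
  "('k::field \<Rightarrow> 'a::ring_1 \<Rightarrow> 'a) \<Rightarrow> (nat \<Rightarrow> 'a set) \<Rightarrow> 'a set \<Rightarrow> ('a \<Rightarrow> 'a \<Rightarrow> bool) \<Rightarrow> bool" where
  "quantum_graded_ASL sc Agr Pi lst \<longleftrightarrow>
     graded_k_algebra sc Agr \<and>
     finite Pi \<and>
     \<comment> \<open>lst is a strict partial order on Pi\<close>
     (\<forall>a\<in>Pi. \<not> lst a a) \<and>
     (\<forall>a\<in>Pi. \<forall>b\<in>Pi. \<forall>c\<in>Pi. lst a b \<and> lst b c \<longrightarrow> lst a c) \<and>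
     \<comment> \<open>(1) homogeneous of positive degree\<close>
     (\<forall>a\<in>Pi. \<exists>n>0. a \<in> Agr n) \<and>
     \<comment> \<open>(2) Pi generates A as a k-algebra\<close>
     module.span sc {prod_list xs | xs. set xs \<subseteq> Pi} = UNIV \<and>
     \<comment> \<open>(3) standard monomials are linearly independent\<close>
     inj_on prod_list (std_words Pi lst) \<and>
     \<not> module.dependent sc (prod_list ` std_words Pi lst) \<and>
     \<comment> \<open>(4) straightening of products of incomparable elements\<close>
     (\<forall>a\<in>Pi. \<forall>b\<in>Pi. a \<noteq> b \<and> \<not> lst a b \<and> \<not> lst b a \<longrightarrow>
        a * b \<in> module.span sc (lower_terms Pi lst a b)) \<and>
     \<comment> \<open>(5) quantum commutation\<close>
     (\<forall>a\<in>Pi. \<forall>b\<in>Pi. \<exists>c. c \<noteq> 0 \<and>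
        a * b - sc c (b * a) \<in> module.span sc (lower_terms Pi lst a b))"

definition left_ideal :: "'a::ring_1 set \<Rightarrow> bool" where
  "left_ideal I \<longleftrightarrow> 0 \<in> I \<and> (\<forall>x\<in>I. \<forall>y\<in>I. x + y \<in> I) \<and> (\<forall>x\<in>I. - x \<in> I) \<and>
     (\<forall>r x. x \<in> I \<longrightarrow> r * x \<in> I)"

definition right_ideal :: "'a::ring_1 set \<Rightarrow> bool" where
  "right_ideal I \<longleftrightarrow> 0 \<in> I \<and> (\<forall>x\<in>I. \<forall>y\<in>I. x + y \<in> I) \<and> (\<forall>x\<in>I. - x \<in> I) \<and>
     (\<forall>r x. x \<in> I \<longrightarrow> x * r \<in> I)"

definition noetherian_ring :: "'a::ring_1 itself \<Rightarrow> bool" where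
  "noetherian_ring _ \<longleftrightarrow>
     (\<forall>I :: nat \<Rightarrow> 'a set. (\<forall>n. left_ideal (I n)) \<and> (\<forall>n. I n \<subseteq> I (Suc n)) \<longrightarrow>
        (\<exists>m. \<forall>n\<ge>m. I n = I m)) \<and>
     (\<forall>I :: nat \<Rightarrow> 'a set. (\<forall>n. right_ideal (I n)) \<and> (\<forall>n. I n \<subseteq> I (Suc n)) \<longrightarrow>
        (\<exists>m. \<forall>n\<ge>m. I n = I m))"

definition polynomial_growth :: "('k::field \<Rightarrow> 'a::ring_1 \<Rightarrow> 'a) \<Rightarrow> (nat \<Rightarrow> 'a set) \<Rightarrow> bool" where
  "polynomial_growth sc Agr \<longleftrightarrow>
     (\<exists>c::real. \<exists>d::nat. c > 0 \<and>
        (\<forall>n\<ge>1. (\<exists>B. finite B \<and> B \<subseteq> Agr n \<and> Agr n \<subseteq> module.span sc B) \<and>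
               real (vector_space.dim sc (Agr n)) \<le> c * real n ^ d))"

end

(*
  Fix an injective rank function rk on Pi that is strictly monotone for <_st and
  compare multisets of ranks first by size, then lexicographically with small ranks weighing
  more. For this well-founded order the relations (4) and (5) straighten every monomial in Pi:
  modulo the span of standard monomials with smaller multisets of ranks it is a nonzero multiple
  of the standard monomial with the same multiset if that multiset is a chain, and zero otherwise.
  So the standard monomials form a basis, every nonzero element has a leading chain, and
  multiplying by a standard monomial adds leading chains as long as the sum is still a chain.
  A strictly ascending sequence of one-sided ideals would therefore produce infinitely many
  leading chains none of which contains an earlier one, contradicting Dickson's lemma.
  Polynomial growth holds because a standard monomial of degree n has at most n factors, so
  dim A_n is at most the number of multisets of size at most n over Pi.
*)
theory Submission
  imports Defs "HOL-Library.Multiset" "HOL-Library.FuncSet"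
begin

lemma ex_mono_subseq_nat:
  fixes f :: "nat \<Rightarrow> nat"
  shows "\<exists>g :: nat \<Rightarrow> nat. strict_mono g \<and> mono (f \<circ> g)"
proof -
  obtain g :: "nat \<Rightarrow> nat" where g: "strict_mono g" "monoseq (f \<circ> g)"
    using seq_monosub[of f] by (auto simp: o_def)
  show ?thesis
  proof (cases "mono (f \<circ> g)")
    case True
    with g show ?thesis by blast
  next
    case False
    then have dec: "decseq (f \<circ> g)" using g(2) by (simp add: monoseq_iff)
    define v where "v = (LEAST v. v \<in> range (f \<circ> g))"
    obtain N where N: "(f \<circ> g) N = v" unfolding v_def by (metis (mono_tags) LeastI rangeE rangeI)
    \<comment> \<open>a decreasing sequence of naturals is eventually constant\<close>
    have "(f \<circ> g) (N + n) = v" for n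
    proof (rule antisym)
      show "(f \<circ> g) (N + n) \<le> v" using decseqD[OF dec, of N "N + n"] N by simp
      show "v \<le> (f \<circ> g) (N + n)" unfolding v_def by (rule Least_le) simp
    qed
    then have "mono (f \<circ> (\<lambda>n. g (N + n)))" by (simp add: mono_def o_def)
    moreover have "strict_mono (\<lambda>n. g (N + n))" using g(1) by (simp add: strict_mono_def)
    ultimately show ?thesis by blast
  qed
qed

lemma ex_mono_subseq_finite:
  fixes f :: "nat \<Rightarrow> 'c \<Rightarrow> nat"
  assumes "finite C"
  shows "\<exists>g :: nat \<Rightarrow> nat. strict_mono g \<and> (\<forall>c\<in>C. mono (\<lambda>i. f (g i) c))"
  using assms
proof (induction C rule: finite_induct)
  case empty
  have "strict_mono (id :: nat \<Rightarrow> nat)" by (simp add: strict_mono_def)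
  then show ?case by blast
next
  case (insert c C)
  then obtain g1 :: "nat \<Rightarrow> nat" where g1: "strict_mono g1" "\<forall>d\<in>C. mono (\<lambda>i. f (g1 i) d)" by blast
  obtain g2 :: "nat \<Rightarrow> nat" where g2: "strict_mono g2" "mono ((\<lambda>i. f (g1 i) c) \<circ> g2)"
    using ex_mono_subseq_nat by blast
  have "strict_mono (g1 \<circ> g2)" using g1(1) g2(1) by (simp add: strict_mono_def)
  moreover have "mono (\<lambda>i. f ((g1 \<circ> g2) i) d)" if "d \<in> insert c C" for d
  proof (cases "d = c")
    case True
    with g2(2) show ?thesis by (simp add: o_def)
  next
    case False
    with that g1(2) have mono_d: "mono (\<lambda>i. f (g1 i) d)" by blast
    show ?thesis
    proof (rule monoI)
      fix x y :: nat assume "x \<le> y"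
      then have "g2 x \<le> g2 y" using strict_mono_mono[OF g2(1)] by (rule monoD[rotated])
      then show "f ((g1 \<circ> g2) x) d \<le> f ((g1 \<circ> g2) y) d" using monoD[OF mono_d] by simp
    qed
  qed
  ultimately show ?case by blast
qed

lemma dickson_multiset:
  fixes N :: "nat \<Rightarrow> 'c multiset"
  assumes "finite C" and "\<And>k. set_mset (N k) \<subseteq> C"
  obtains i j where "i < j" and "N i \<subseteq># N j"
proof -
  obtain g :: "nat \<Rightarrow> nat" where g: "strict_mono g" "\<forall>c\<in>C. mono (\<lambda>i. count (N (g i)) c)"
    using ex_mono_subseq_finite[OF assms(1), of "\<lambda>n c. count (N n) c"] by blast
  have "count (N (g 0)) c \<le> count (N (g 1)) c" for c
  proof (cases "c \<in> C")
    case True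
    then show ?thesis using g(2) by (auto dest: monoD)
  next
    case False
    then show ?thesis using assms(2) by (metis count_eq_zero_iff subsetD zero_le)
  qed
  then have "N (g 0) \<subseteq># N (g 1)" by (simp add: subseteq_mset_def)
  moreover have "g 0 < g 1" using g(1) by (simp add: strict_mono_def)
  ultimately show thesis by (rule that[rotated])
qed

lemma ex_rank_extending:
  fixes r :: "'a \<Rightarrow> 'a \<Rightarrow> bool"
  assumes fin: "finite P" and irrefl: "\<forall>a\<in>P. \<not> r a a"
    and trans: "\<forall>a\<in>P. \<forall>b\<in>P. \<forall>c\<in>P. r a b \<and> r b c \<longrightarrow> r a c"
  obtains rk :: "'a \<Rightarrow> nat"
  where "inj_on rk P" and "\<And>a b. a \<in> P \<Longrightarrow> b \<in> P \<Longrightarrow> r a b \<Longrightarrow> rk a < rk b"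
proof -
  obtain h where h: "bij_betw h P {0..<card P}" using ex_bij_betw_finite_nat[OF fin] by blast
  define pred where "pred a = {b \<in> P. r b a}" for a
  \<comment> \<open>the number of predecessors, made injective by an enumeration of P\<close>
  define rk where "rk a = card (pred a) * card P + h a" for a
  have h_less: "h a < card P" if "a \<in> P" for a using h that by (auto simp: bij_betw_def)
  have "inj_on rk P"
  proof (rule inj_onI)
    fix a b assume ab: "a \<in> P" "b \<in> P" "rk a = rk b"
    then have "h a = h b" using h_less unfolding rk_def by (metis mod_mult_self3 mod_less)
    then show "a = b" using h ab by (auto simp: bij_betw_def inj_on_def)
  qed
  moreover have "rk a < rk b" if ab: "a \<in> P" "b \<in> P" "r a b" for a b
  proof -
    have "pred a \<subset> pred b" unfolding pred_def using ab irrefl trans by blast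
    then have "card (pred a) + 1 \<le> card (pred b)"
      using fin by (simp add: pred_def psubset_card_mono Suc_le_eq)
    then have "(card (pred a) + 1) * card P \<le> card (pred b) * card P" by (rule mult_right_mono) simp
    then show ?thesis using h_less[OF ab(1)] by (simp add: rk_def algebra_simps)
  qed
  ultimately show thesis by (rule that)
qed

text \<open>Thus replacing two factors by one or two factors below both of them
  decreases a multiset of ranks, as the lower terms of relations (4) and (5) require.\<close>
definition grlex_less :: "nat multiset \<Rightarrow> nat multiset \<Rightarrow> bool" where
  "grlex_less M N \<longleftrightarrow> size M < size N \<or>
     (size M = size N \<and> (\<exists>x. count N x < count M x \<and> (\<forall>y<x. count M y = count N y)))"

lemma grlex_less_irrefl: "\<not> grlex_less M M"
  by (auto simp: grlex_less_def)

lemma grlex_less_imp_size_le: "grlex_less M N \<Longrightarrow> size M \<le> size N"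
  by (auto simp: grlex_less_def)

lemma grlex_less_trans:
  assumes "grlex_less K M" and "grlex_less M N"
  shows "grlex_less K N"
proof (cases "size K < size N")
  case True
  then show ?thesis by (simp add: grlex_less_def)
next
  case False
  with assms have size: "size K = size M" "size M = size N"
    using grlex_less_imp_size_le by (metis le_antisym le_less_trans not_le)+
  obtain x1 where x1: "count M x1 < count K x1" "\<forall>y<x1. count K y = count M y"
    using assms(1) size by (auto simp: grlex_less_def)
  obtain x2 where x2: "count N x2 < count M x2" "\<forall>y<x2. count M y = count N y"
    using assms(2) size by (auto simp: grlex_less_def)
  have "\<exists>x. count N x < count K x \<and> (\<forall>y<x. count K y = count N y)"
  proof (cases x1 x2 rule: linorder_cases)
    case less
    with x1 x2 show ?thesis by (intro exI[of _ x1]) simp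
  next
    case equal
    with x1 x2 show ?thesis by (intro exI[of _ x1]) simp
  next
    case greater
    with x1 x2 show ?thesis by (intro exI[of _ x2]) simp
  qed
  with size show ?thesis by (simp add: grlex_less_def)
qed

lemma grlex_less_linear:
  assumes "M \<noteq> N"
  shows "grlex_less M N \<or> grlex_less N M"
proof (cases "size M = size N")
  case True
  have "\<exists>x. count M x \<noteq> count N x" using assms by (meson multiset_eqI)
  define x where "x = (LEAST x. count M x \<noteq> count N x)"
  have x: "count M x \<noteq> count N x" unfolding x_def using \<open>\<exists>x. _\<close> by (rule LeastI_ex)
  have below: "count M y = count N y" if "y < x" for y
    using not_less_Least[of y "\<lambda>x. count M x \<noteq> count N x"] that unfolding x_def by blast
  show ?thesis
  proof (cases "count M x < count N x")
    case True
    then have "grlex_less N M"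
      unfolding grlex_less_def using \<open>size M = size N\<close> below by (intro disjI2 conjI exI[of _ x]) simp_all
    then show ?thesis ..
  next
    case False
    then have "grlex_less M N"
      unfolding grlex_less_def using \<open>size M = size N\<close> below x by (intro disjI2 conjI exI[of _ x]) simp_all
    then show ?thesis ..
  qed
next
  case False
  then have "size M < size N \<or> size N < size M" by linarith
  then show ?thesis unfolding grlex_less_def by blast
qed

lemma grlex_less_add_left:
  assumes "grlex_less M N"
  shows "grlex_less (K + M) (K + N)"
  using assms unfolding grlex_less_def by (elim disjE conjE exE) auto

lemma grlex_less_add_right: "grlex_less M N \<Longrightarrow> grlex_less (M + K) (N + K)"
  using grlex_less_add_left[of M N K] by (simp add: add.commute)

lemma grlex_less_singleton_pair: "grlex_less {#x#} {#y, z#}"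
  by (simp add: grlex_less_def)

lemma grlex_less_pair:
  assumes "l < a" and "l < b" and "l \<le> m"
  shows "grlex_less {#l, m#} {#a, b#}"
  unfolding grlex_less_def using assms by (intro disjI2 conjI exI[of _ l]) auto

lemma finite_msets_size_le:
  assumes "finite R"
  shows "finite {M. set_mset M \<subseteq> R \<and> size M \<le> n}"
proof -
  have "{M. set_mset M \<subseteq> R \<and> size M \<le> n} = (\<Union>s\<le>n. multisets_of_size R s)"
    by (auto simp: multisets_of_size_def)
  then show ?thesis using assms by auto
qed

lemma card_msets_size_le:
  assumes "finite R"
  shows "card {M. set_mset M \<subseteq> R \<and> size M \<le> n} \<le> (n + 1) ^ card R"
proof -
  let ?S = "{M. set_mset M \<subseteq> R \<and> size M \<le> n}"
  let ?counts = "\<lambda>M. restrict (count M) R"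
  have "inj_on ?counts ?S"
  proof (rule inj_onI)
    fix M M' assume M: "M \<in> ?S" and M': "M' \<in> ?S" and eq: "?counts M = ?counts M'"
    have "count M x = count M' x" for x
    proof (cases "x \<in> R")
      case True
      then show ?thesis using fun_cong[OF eq, of x] by simp
    next
      case False
      then have "x \<notin># M" "x \<notin># M'" using M M' by auto
      then show ?thesis by (simp add: not_in_iff)
    qed
    then show "M = M'" by (rule multiset_eqI)
  qed
  moreover have "?counts ` ?S \<subseteq> PiE R (\<lambda>_. {0..n})"
  proof (rule image_subsetI)
    fix M assume "M \<in> ?S"
    then have "count M x \<le> n" for x using count_le_size[of M x] by simp
    then show "?counts M \<in> PiE R (\<lambda>_. {0..n})" by (simp add: restrict_PiE_iff)
  qed
  ultimately have "card ?S \<le> card (PiE R (\<lambda>_. {0..n}))"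
    using assms by (intro card_inj_on_le) (simp_all add: finite_PiE)
  also have "\<dots> = (n + 1) ^ card R" using assms by (simp add: card_PiE)
  finally show ?thesis .
qed

lemma wf_grlex_less_on:
  assumes "finite R"
  shows "wf {(M, N). set_mset M \<subseteq> R \<and> set_mset N \<subseteq> R \<and> grlex_less M N}"
proof -
  define below where "below N = {M. set_mset M \<subseteq> R \<and> grlex_less M N}" for N
  have "below N \<subseteq> {M. set_mset M \<subseteq> R \<and> size M \<le> size N}" for N
    using grlex_less_imp_size_le by (auto simp: below_def)
  then have finite: "finite (below N)" for N
    by (rule finite_subset) (rule finite_msets_size_le[OF assms])
  have "card (below M) < card (below N)"
    if "set_mset M \<subseteq> R" and "grlex_less M N" for M N
  proof (rule psubset_card_mono[OF finite])
    have "below M \<subseteq> below N" using grlex_less_trans[OF _ that(2)] by (auto simp: below_def)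
    moreover have "M \<in> below N - below M" using that grlex_less_irrefl by (simp add: below_def)
    ultimately show "below M \<subset> below N" by blast
  qed
  then have "{(M, N). set_mset M \<subseteq> R \<and> set_mset N \<subseteq> R \<and> grlex_less M N} \<subseteq> measure (card \<circ> below)"
    by (intro subrelI) simp
  then show ?thesis by (rule wf_subset[OF wf_measure])
qed

lemma grlex_less_induct [consumes 2, case_names less]:
  assumes "finite R" and "set_mset N \<subseteq> R"
    and "\<And>N. set_mset N \<subseteq> R \<Longrightarrow> (\<And>K. set_mset K \<subseteq> R \<Longrightarrow> grlex_less K N \<Longrightarrow> P K) \<Longrightarrow> P N"
  shows "P N"
proof -
  have "set_mset N \<subseteq> R \<longrightarrow> P N"
  proof (induction N rule: wf_induct_rule[OF wf_grlex_less_on[OF assms(1)]])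
    case (1 N)
    then show ?case by (blast intro: assms(3))
  qed
  with assms(2) show ?thesis by blast
qed

locale assoc_algebra =
  fixes sc :: "'k::field \<Rightarrow> 'a::ring_1 \<Rightarrow> 'a"
  assumes k_algebra: "k_algebra sc"
begin

sublocale vector_space sc
  using k_algebra by (simp add: k_algebra_def)

lemma scale_mult_left: "sc c x * y = sc c (x * y)"
  using k_algebra unfolding k_algebra_def by metis

lemma scale_mult_right: "x * sc c y = sc c (x * y)"
  using k_algebra unfolding k_algebra_def by metis

lemma span_diff_scaleD: "x - sc c y \<in> span S \<Longrightarrow> y \<in> span S \<Longrightarrow> x \<in> span S"
  using span_add[OF _ span_scale, of "x - sc c y" S y c] by simp

lemma sandwich_in_span:
  assumes "x \<in> span S" and "\<And>s. s \<in> S \<Longrightarrow> u * s * v \<in> span T"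
  shows "u * x * v \<in> span T"
  using assms(1)
proof (induction rule: span_induct_alt)
  case base
  show ?case by (simp add: span_zero)
next
  case (step c s y)
  have "u * (sc c s + y) * v = sc c (u * s * v) + u * y * v"
    by (simp add: distrib_left distrib_right scale_mult_left scale_mult_right)
  then show ?case using step assms(2) by (simp add: span_add span_scale)
qed

end

locale graded_algebra =
  fixes sc :: "'k::field \<Rightarrow> 'a::ring_1 \<Rightarrow> 'a" and Agr :: "nat \<Rightarrow> 'a set"
  assumes graded: "graded_k_algebra sc Agr"
begin

sublocale assoc_algebra sc
  using graded by unfold_locales (simp add: graded_k_algebra_def)

lemma subspace_Agr: "subspace (Agr n)"
  using graded by (simp add: graded_k_algebra_def)

lemma one_in_Agr: "1 \<in> Agr 0"
  using graded by (simp add: graded_k_algebra_def)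

lemma mult_in_Agr: "x \<in> Agr i \<Longrightarrow> y \<in> Agr j \<Longrightarrow> x * y \<in> Agr (i + j)"
  using graded by (simp add: graded_k_algebra_def)

lemma homogeneous_sum_eq_0:
  "(\<forall>i\<le>N. f i \<in> Agr i) \<Longrightarrow> (\<Sum>i\<le>N. f i) = 0 \<Longrightarrow> i \<le> N \<Longrightarrow> f i = 0"
  using graded unfolding graded_k_algebra_def by blast

lemma homogeneous_degree_unique:
  assumes "x \<in> Agr i" and "x \<in> Agr j" and "x \<noteq> 0"
  shows "i = j"
proof (rule ccontr)
  assume "i \<noteq> j"
  define f where "f k = (if k = i then x else 0) + (if k = j then - x else 0)" for k
  have "\<forall>k\<le>max i j. f k \<in> Agr k"
    using assms subspace_Agr by (auto simp: f_def subspace_0 subspace_neg)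
  moreover have "(\<Sum>k\<le>max i j. f k) = 0"
    by (simp add: f_def sum.distrib)
  ultimately have "f i = 0" by (rule homogeneous_sum_eq_0) simp
  with \<open>i \<noteq> j\<close> assms(3) show False by (simp add: f_def)
qed

lemma homogeneous_sum_component:
  assumes x: "x \<in> Agr n" and "finite t" and x_eq: "x = (\<Sum>b\<in>t. g b)"
    and homogeneous: "\<And>b. b \<in> t \<Longrightarrow> g b \<in> Agr (deg b)"
  shows "x = (\<Sum>b\<in>{b\<in>t. deg b = n}. g b)"
proof -
  define y where "y d = (\<Sum>b\<in>{b\<in>t. deg b = d}. g b)" for d
  have y: "y d \<in> Agr d" for d
    unfolding y_def using subspace_Agr by (rule subspace_sum) (use homogeneous in auto)
  define N where "N = n + sum deg t"
  have "deg ` t \<subseteq> {..N}"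
    unfolding N_def using \<open>finite t\<close> by (auto intro: member_le_sum trans_le_add2)
  then have x_sum: "x = (\<Sum>d\<le>N. y d)"
    unfolding y_def x_eq using \<open>finite t\<close> by (simp add: sum.group)
  \<comment> \<open>compare this decomposition of x into homogeneous parts with the trivial one\<close>
  define f where "f d = y d - (if d = n then x else 0)" for d
  have "\<forall>d\<le>N. f d \<in> Agr d"
    using x y subspace_Agr by (auto simp: f_def subspace_0 subspace_diff)
  moreover have "(\<Sum>d\<le>N. f d) = 0"
    using x_sum by (simp add: f_def sum_subtractf N_def)
  ultimately have "f n = 0" by (rule homogeneous_sum_eq_0) (simp add: N_def)
  then show ?thesis by (simp add: f_def y_def)
qed

lemma Agr_subset_span_homogeneous:
  assumes span_B: "span B = UNIV" and homogeneous: "\<And>b. b \<in> B \<Longrightarrow> \<exists>d. b \<in> Agr d"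
  shows "Agr n \<subseteq> span (B \<inter> Agr n)"
proof
  fix x assume x: "x \<in> Agr n"
  obtain t r where t: "finite t" "t \<subseteq> B" and x_eq: "x = (\<Sum>b\<in>t. sc (r b) b)"
    using span_B unfolding span_explicit by blast
  define deg where "deg b = (SOME d. b \<in> Agr d)" for b
  have deg: "b \<in> Agr (deg b)" if "b \<in> B" for b
    unfolding deg_def using homogeneous[OF that] by (rule someI_ex)
  then have "x = (\<Sum>b\<in>{b\<in>t. deg b = n}. sc (r b) b)"
    using x t x_eq subspace_Agr by (intro homogeneous_sum_component) (auto intro: subspace_scale)
  also have "\<dots> \<in> span (B \<inter> Agr n)"
    using t(2) deg by (intro span_sum span_scale span_base) auto
  finally show "x \<in> span (B \<inter> Agr n)" .
qed

end

locale ranked_ASL =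
  fixes sc :: "'k::field \<Rightarrow> 'a::ring_1 \<Rightarrow> 'a" and Agr :: "nat \<Rightarrow> 'a set"
    and Pi :: "'a set" and lst :: "'a \<Rightarrow> 'a \<Rightarrow> bool" and rk :: "'a \<Rightarrow> nat"
  assumes ASL: "quantum_graded_ASL sc Agr Pi lst"
    and rk_inj: "inj_on rk Pi"
    and rk_mono: "\<And>a b. a \<in> Pi \<Longrightarrow> b \<in> Pi \<Longrightarrow> lst a b \<Longrightarrow> rk a < rk b"
begin

sublocale graded_algebra sc Agr
  using ASL by unfold_locales (simp add: quantum_graded_ASL_def)

lemma finite_Pi: "finite Pi"
  using ASL unfolding quantum_graded_ASL_def by blast

lemma Pi_homogeneous: "a \<in> Pi \<Longrightarrow> \<exists>d>0. a \<in> Agr d"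
  using ASL unfolding quantum_graded_ASL_def by blast

lemma span_words: "span {prod_list w | w. set w \<subseteq> Pi} = UNIV"
  using ASL unfolding quantum_graded_ASL_def by blast

lemma inj_on_std_words: "inj_on prod_list (std_words Pi lst)"
  using ASL unfolding quantum_graded_ASL_def by blast

lemma independent_std_words: "independent (prod_list ` std_words Pi lst)"
  using ASL unfolding quantum_graded_ASL_def by blast

lemma incomparable_straightening:
  "a \<in> Pi \<Longrightarrow> b \<in> Pi \<Longrightarrow> a \<noteq> b \<Longrightarrow> \<not> lst a b \<Longrightarrow> \<not> lst b a \<Longrightarrow>
    a * b \<in> span (lower_terms Pi lst a b)"
  using ASL unfolding quantum_graded_ASL_def by blast

lemma quantum_commutation:
  "a \<in> Pi \<Longrightarrow> b \<in> Pi \<Longrightarrow> \<exists>c. c \<noteq> 0 \<and> a * b - sc c (b * a) \<in> span (lower_terms Pi lst a b)"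
  using ASL unfolding quantum_graded_ASL_def by blast

definition ranks :: "'a list \<Rightarrow> nat multiset" where
  "ranks w = mset (map rk w)"

definition unrank :: "nat \<Rightarrow> 'a" where
  "unrank = inv_into Pi rk"

definition word_of :: "nat multiset \<Rightarrow> 'a list" where
  "word_of M = map unrank (sorted_list_of_multiset M)"

definition mon :: "nat multiset \<Rightarrow> 'a" where
  "mon M = prod_list (word_of M)"

lemma ranks_Nil [simp]: "ranks [] = {#}"
  by (simp add: ranks_def)

lemma ranks_Cons [simp]: "ranks (a # w) = add_mset (rk a) (ranks w)"
  by (simp add: ranks_def)

lemma ranks_append [simp]: "ranks (u @ v) = ranks u + ranks v"
  by (simp add: ranks_def)

lemma set_mset_ranks [simp]: "set_mset (ranks w) = rk ` set w"
  by (simp add: ranks_def)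

lemma ranks_subset: "set w \<subseteq> Pi \<Longrightarrow> set_mset (ranks w) \<subseteq> rk ` Pi"
  by auto

lemma unrank_rk [simp]: "a \<in> Pi \<Longrightarrow> unrank (rk a) = a"
  unfolding unrank_def using rk_inj by (simp add: inv_into_f_f)

lemma rk_unrank [simp]: "x \<in> rk ` Pi \<Longrightarrow> rk (unrank x) = x"
  unfolding unrank_def by (simp add: f_inv_into_f)

lemma unrank_in_Pi: "x \<in> rk ` Pi \<Longrightarrow> unrank x \<in> Pi"
  unfolding unrank_def by (simp add: inv_into_into)

lemma set_word_of: "set_mset M \<subseteq> rk ` Pi \<Longrightarrow> set (word_of M) \<subseteq> Pi"
  by (auto simp: word_of_def intro: unrank_in_Pi)

lemma ranks_word_of:
  assumes "set_mset M \<subseteq> rk ` Pi"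
  shows "ranks (word_of M) = M"
proof -
  have "map rk (word_of M) = sorted_list_of_multiset M"
    using assms by (auto simp: word_of_def intro!: map_idI)
  then show ?thesis by (simp add: ranks_def)
qed

lemma length_word_of: "length (word_of M) = size M"
  by (metis word_of_def length_map mset_sorted_list_of_multiset size_mset)

lemma mon_empty: "mon {#} = 1"
  by (simp add: mon_def word_of_def)

lemma rank_eq_iff: "a \<in> Pi \<Longrightarrow> b \<in> Pi \<Longrightarrow> rk a = rk b \<longleftrightarrow> a = b"
  using rk_inj by (auto simp: inj_on_def)

section \<open>Straightening\<close>

definition below_words :: "nat multiset \<Rightarrow> 'a set" where
  "below_words N = span {prod_list w | w. set w \<subseteq> Pi \<and> grlex_less (ranks w) N}"

definition equiv_below :: "nat multiset \<Rightarrow> 'a \<Rightarrow> 'a \<Rightarrow> bool" where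
  "equiv_below N x y \<longleftrightarrow> (\<exists>c. c \<noteq> 0 \<and> x - sc c y \<in> below_words N)"

lemma word_in_below_words:
  "set w \<subseteq> Pi \<Longrightarrow> grlex_less (ranks w) N \<Longrightarrow> prod_list w \<in> below_words N"
  unfolding below_words_def by (rule span_base) blast

lemma lower_terms_sandwich_below:
  assumes ab: "a \<in> Pi" "b \<in> Pi" and x: "x \<in> span (lower_terms Pi lst a b)"
    and u: "set u \<subseteq> Pi" and v: "set v \<subseteq> Pi"
  shows "prod_list u * x * prod_list v \<in> below_words (ranks (u @ a # b # v))"
  using x unfolding below_words_def
proof (rule sandwich_in_span)
  fix s assume "s \<in> lower_terms Pi lst a b"
  then consider (single) "s \<in> Pi" "lst s a" "lst s b"
    | (pair) l m where "s = l * m" "l \<in> Pi" "m \<in> Pi" "lst l m \<or> l = m" "lst l a" "lst l b"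
    unfolding lower_terms_def by blast
  then show "prod_list u * s * prod_list v
      \<in> span {prod_list w | w. set w \<subseteq> Pi \<and> grlex_less (ranks w) (ranks (u @ a # b # v))}"
  proof cases
    case single
    then have "grlex_less (ranks u + {#rk s#} + ranks v) (ranks u + {#rk a, rk b#} + ranks v)"
      by (intro grlex_less_add_right grlex_less_add_left grlex_less_singleton_pair)
    then have "prod_list (u @ s # v) \<in> below_words (ranks (u @ a # b # v))"
      using single u v by (intro word_in_below_words) (auto simp: ac_simps)
    then show ?thesis by (simp add: below_words_def mult.assoc)
  next
    case pair
    then have "rk l < rk a" "rk l < rk b" "rk l \<le> rk m" using ab rk_mono by (auto intro: less_imp_le)
    then have "grlex_less (ranks u + {#rk l, rk m#} + ranks v) (ranks u + {#rk a, rk b#} + ranks v)"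
      by (intro grlex_less_add_right grlex_less_add_left grlex_less_pair)
    then have "prod_list (u @ l # m # v) \<in> below_words (ranks (u @ a # b # v))"
      using pair u v by (intro word_in_below_words) (auto simp: ac_simps)
    then show ?thesis using pair(1) by (simp add: below_words_def mult.assoc)
  qed
qed

lemma equiv_below_refl: "equiv_below N x x"
  unfolding equiv_below_def below_words_def by (intro exI[of _ 1]) (simp add: span_zero)

lemma equiv_below_sym:
  assumes "equiv_below N x y"
  shows "equiv_below N y x"
proof -
  obtain c where c: "c \<noteq> 0" "x - sc c y \<in> below_words N"
    using assms unfolding equiv_below_def by blast
  have "sc (- inverse c) (x - sc c y) \<in> below_words N"
    using c(2) unfolding below_words_def by (rule span_scale)
  moreover have "sc (- inverse c) (x - sc c y) = y - sc (inverse c) x"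
    using c(1) by (simp add: scale_right_diff_distrib scale_minus_left)
  ultimately show ?thesis using c(1) unfolding equiv_below_def by (intro exI[of _ "inverse c"]) auto
qed

lemma equiv_below_trans:
  assumes "equiv_below N x y" and "equiv_below N y z"
  shows "equiv_below N x z"
proof -
  obtain c where c: "c \<noteq> 0" "x - sc c y \<in> below_words N"
    using assms(1) unfolding equiv_below_def by blast
  obtain d where d: "d \<noteq> 0" "y - sc d z \<in> below_words N"
    using assms(2) unfolding equiv_below_def by blast
  have "(x - sc c y) + sc c (y - sc d z) \<in> below_words N"
    using c d unfolding below_words_def by (intro span_add span_scale)
  moreover have "(x - sc c y) + sc c (y - sc d z) = x - sc (c * d) z"
    by (simp add: scale_right_diff_distrib)
  ultimately show ?thesis using c d unfolding equiv_below_def by (intro exI[of _ "c * d"]) auto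
qed

lemma equiv_below_mult_left:
  assumes u: "set u \<subseteq> Pi" and "equiv_below N x y"
  shows "equiv_below (ranks u + N) (prod_list u * x) (prod_list u * y)"
proof -
  obtain c where c: "c \<noteq> 0" "x - sc c y \<in> below_words N"
    using assms(2) unfolding equiv_below_def by blast
  have "prod_list u * (x - sc c y) * 1 \<in> below_words (ranks u + N)"
    using c(2) unfolding below_words_def
  proof (rule sandwich_in_span)
    fix s assume "s \<in> {prod_list w | w. set w \<subseteq> Pi \<and> grlex_less (ranks w) N}"
    then obtain w where "s = prod_list w" "set w \<subseteq> Pi" "grlex_less (ranks w) N" by blast
    then have "prod_list u * s * 1 \<in> below_words (ranks u + N)"
      using u word_in_below_words[of "u @ w"] grlex_less_add_left by simp
    then show "prod_list u * s * 1 \<in> span {prod_list w | w. set w \<subseteq> Pi \<and> grlex_less (ranks w) (ranks u + N)}"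
      by (simp add: below_words_def)
  qed
  then have "prod_list u * x - sc c (prod_list u * y) \<in> below_words (ranks u + N)"
    by (simp add: right_diff_distrib scale_mult_right)
  with c(1) show ?thesis unfolding equiv_below_def by blast
qed

lemma equiv_below_swap:
  assumes "a \<in> Pi" "b \<in> Pi" "set u \<subseteq> Pi" "set v \<subseteq> Pi"
  shows "equiv_below (ranks (u @ a # b # v)) (prod_list (u @ a # b # v)) (prod_list (u @ b # a # v))"
proof -
  obtain c where c: "c \<noteq> 0" "a * b - sc c (b * a) \<in> span (lower_terms Pi lst a b)"
    using quantum_commutation assms by blast
  have "prod_list u * (a * b - sc c (b * a)) * prod_list v \<in> below_words (ranks (u @ a # b # v))"
    using assms c(2) by (intro lower_terms_sandwich_below)
  moreover have "prod_list u * (a * b - sc c (b * a)) * prod_list v =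
      prod_list (u @ a # b # v) - sc c (prod_list (u @ b # a # v))"
    by (simp add: left_diff_distrib right_diff_distrib scale_mult_left scale_mult_right mult.assoc)
  ultimately show ?thesis using c(1) unfolding equiv_below_def by auto
qed

lemma equiv_below_move_front:
  assumes "set (u @ p @ x # q) \<subseteq> Pi"
  shows "equiv_below (ranks (u @ p @ x # q)) (prod_list (u @ p @ x # q)) (prod_list (u @ x # p @ q))"
  using assms
proof (induction p arbitrary: u)
  case Nil
  then show ?case by (simp add: equiv_below_refl)
next
  case (Cons y p)
  have "equiv_below (ranks ((u @ [y]) @ p @ x # q))
      (prod_list ((u @ [y]) @ p @ x # q)) (prod_list ((u @ [y]) @ x # p @ q))"
    using Cons by (intro Cons.IH) auto
  moreover have "equiv_below (ranks (u @ y # x # p @ q))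
      (prod_list (u @ y # x # p @ q)) (prod_list (u @ x # y # p @ q))"
    using Cons.prems by (intro equiv_below_swap) auto
  ultimately show ?case by (auto simp: ac_simps intro: equiv_below_trans)
qed

lemma equiv_below_perm:
  assumes "set w \<subseteq> Pi" and "set w' \<subseteq> Pi" and "ranks w = ranks w'"
  shows "equiv_below (ranks w) (prod_list w) (prod_list w')"
  using assms
proof (induction w arbitrary: w')
  case Nil
  then show ?case by (simp add: ranks_def equiv_below_refl)
next
  case (Cons x v)
  then have "rk x \<in> rk ` set w'" by (metis ranks_Cons set_mset_ranks union_single_eq_member)
  then have "x \<in> set w'" using Cons.prems rank_eq_iff by auto
  then obtain p q where w': "w' = p @ x # q" by (metis split_list)
  have "equiv_below (ranks v) (prod_list v) (prod_list (p @ q))"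
    using Cons.prems w' by (intro Cons.IH) auto
  then have "equiv_below (ranks (x # v)) (prod_list (x # v)) (prod_list (x # p @ q))"
    using equiv_below_mult_left[of "[x]"] Cons.prems by fastforce
  moreover have "equiv_below (ranks (x # v)) (prod_list w') (prod_list (x # p @ q))"
    using equiv_below_move_front[of "[]" p x q] Cons.prems w' by simp
  ultimately show ?case by (blast intro: equiv_below_sym equiv_below_trans)
qed

lemma word_equiv_mon:
  assumes "set w \<subseteq> Pi"
  shows "equiv_below (ranks w) (prod_list w) (mon (ranks w))"
  unfolding mon_def using assms set_word_of[OF ranks_subset] ranks_word_of[OF ranks_subset]
  by (intro equiv_below_perm) auto

definition is_chain :: "nat multiset \<Rightarrow> bool" where
  "is_chain M \<longleftrightarrow> set_mset M \<subseteq> rk ` Pi \<and>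
     (\<forall>x\<in>#M. \<forall>y\<in>#M. x = y \<or> lst (unrank x) (unrank y) \<or> lst (unrank y) (unrank x))"

definition below_chains :: "nat multiset \<Rightarrow> 'a set" where
  "below_chains N = span (mon ` {K. is_chain K \<and> grlex_less K N})"

definition upto_chains :: "nat multiset \<Rightarrow> 'a set" where
  "upto_chains N = span (mon ` {K. is_chain K \<and> (K = N \<or> grlex_less K N)})"

lemma is_chain_subset_mset:
  assumes "is_chain N" and "M \<subseteq># N"
  shows "is_chain M"
proof -
  have "set_mset M \<subseteq> set_mset N" using assms(2) by (rule set_mset_mono)
  with assms(1) show ?thesis unfolding is_chain_def by blast
qed

lemma is_chain_empty [simp]: "is_chain {#}"
  by (simp add: is_chain_def)

lemma mon_in_upto_chains: "is_chain K \<Longrightarrow> K = N \<or> grlex_less K N \<Longrightarrow> mon K \<in> upto_chains N"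
  unfolding upto_chains_def by (rule span_base) blast

lemma below_chains_subset_upto_chains: "below_chains N \<subseteq> upto_chains N"
  unfolding below_chains_def upto_chains_def by (rule span_mono) blast

lemma upto_chains_subset_below_chains: "grlex_less N N' \<Longrightarrow> upto_chains N \<subseteq> below_chains N'"
  unfolding below_chains_def upto_chains_def by (rule span_mono) (auto intro: grlex_less_trans)

lemma non_chain_word_below:
  assumes w: "set w \<subseteq> Pi" and non_chain: "\<not> is_chain (ranks w)"
  shows "prod_list w \<in> below_words (ranks w)"
proof -
  obtain a b where ab: "a \<in> set w" "b \<in> set w" "a \<noteq> b" "\<not> lst a b" "\<not> lst b a"
    using non_chain w by (auto simp: is_chain_def subset_iff)
  define w' where "w' = a # b # remove1 b (remove1 a w)"
  have "b \<in> set (remove1 a w)" using ab by (simp add: in_set_remove1)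
  then have "mset w' = mset w"
    using ab(1) unfolding w'_def by (metis mset.simps(2) mset_remove1 insert_DiffM set_mset_mset)
  then have same_ranks: "ranks w' = ranks w" unfolding ranks_def mset_map by simp
  have "set (remove1 b (remove1 a w)) \<subseteq> set w" by (meson order_trans set_remove1_subset)
  then have w': "set w' \<subseteq> Pi" using w ab by (auto simp: w'_def)
  have "prod_list u * (a * b) * prod_list v \<in> below_words (ranks (u @ a # b # v))"
    if "set u \<subseteq> Pi" "set v \<subseteq> Pi" for u v
    using that ab w by (intro lower_terms_sandwich_below incomparable_straightening) auto
  from this[of "[]" "remove1 b (remove1 a w)"] have "prod_list w' \<in> below_words (ranks w)"
    using w' same_ranks by (simp add: w'_def mult.assoc)
  moreover obtain c where "prod_list w - sc c (prod_list w') \<in> below_words (ranks w)"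
    using equiv_below_perm[OF w w' same_ranks[symmetric]] unfolding equiv_below_def by blast
  ultimately show ?thesis unfolding below_words_def by (rule span_diff_scaleD[rotated])
qed

lemma below_words_subset_below_chains:
  assumes "set_mset N \<subseteq> rk ` Pi"
  shows "below_words N \<subseteq> below_chains N"
  using finite_imageI[OF finite_Pi] assms
proof (induction N rule: grlex_less_induct)
  case (less N)
  show ?case
    unfolding below_words_def
  proof (rule span_minimal)
    show "subspace (below_chains N)" unfolding below_chains_def by simp
    show "{prod_list w | w. set w \<subseteq> Pi \<and> grlex_less (ranks w) N} \<subseteq> below_chains N"
    proof clarify
      fix w assume w: "set w \<subseteq> Pi" and less_N: "grlex_less (ranks w) N"
      then have "below_words (ranks w) \<subseteq> below_chains (ranks w)"
        by (intro less.IH) auto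
      also have "\<dots> \<subseteq> below_chains N"
        using less_N below_chains_subset_upto_chains upto_chains_subset_below_chains by blast
      finally have lower: "below_words (ranks w) \<subseteq> below_chains N" .
      show "prod_list w \<in> below_chains N"
      proof (cases "is_chain (ranks w)")
        case True
        obtain c where "prod_list w - sc c (mon (ranks w)) \<in> below_words (ranks w)"
          using word_equiv_mon[OF w] by (auto simp: equiv_below_def)
        moreover have "mon (ranks w) \<in> below_chains N"
          unfolding below_chains_def using True less_N by (intro span_base) blast
        ultimately show ?thesis
          using lower unfolding below_chains_def by (blast intro: span_diff_scaleD)
      next
        case False
        then show ?thesis using w lower non_chain_word_below by blast
      qed
    qed
  qed
qed

lemma word_straightening:
  assumes "set w \<subseteq> Pi"
  obtains c where "c \<noteq> 0" and "prod_list w - sc c (mon (ranks w)) \<in> below_chains (ranks w)"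
  using that word_equiv_mon[OF assms] below_words_subset_below_chains[OF ranks_subset[OF assms]]
  unfolding equiv_below_def by blast

lemma non_chain_word_in_below_chains:
  "set w \<subseteq> Pi \<Longrightarrow> \<not> is_chain (ranks w) \<Longrightarrow> prod_list w \<in> below_chains (ranks w)"
  using non_chain_word_below below_words_subset_below_chains[of "ranks w"] by auto

lemma word_in_upto_chains:
  assumes w: "set w \<subseteq> Pi"
  shows "prod_list w \<in> upto_chains (ranks w)"
proof (cases "is_chain (ranks w)")
  case True
  obtain c where "prod_list w - sc c (mon (ranks w)) \<in> upto_chains (ranks w)"
    using word_straightening[OF w] below_chains_subset_upto_chains by blast
  moreover have "mon (ranks w) \<in> upto_chains (ranks w)" using True by (intro mon_in_upto_chains) simp_all
  ultimately show ?thesis unfolding upto_chains_def by (rule span_diff_scaleD)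
next
  case False
  then show ?thesis using w non_chain_word_in_below_chains below_chains_subset_upto_chains by blast
qed

section \<open>Standard monomial basis and leading chains\<close>

lemma word_of_chain:
  assumes "is_chain M"
  shows "set (word_of M) \<subseteq> Pi" and "ranks (word_of M) = M"
  using assms set_word_of ranks_word_of by (auto simp: is_chain_def)

lemma word_of_chain_std:
  assumes chain: "is_chain M"
  shows "word_of M \<in> std_words Pi lst"
proof -
  have ranks: "set_mset M \<subseteq> rk ` Pi" using chain by (simp add: is_chain_def)
  have "sorted_wrt (\<lambda>x y. lst (unrank x) (unrank y) \<or> unrank x = unrank y) (sorted_list_of_multiset M)"
  proof (rule sorted_wrt_mono_rel[OF _ sorted_sorted_list_of_multiset])
    fix x y assume "x \<in> set (sorted_list_of_multiset M)" "y \<in> set (sorted_list_of_multiset M)" "x \<le> y"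
    then have xy: "x \<in># M" "y \<in># M" "x \<le> y" by auto
    have "\<not> lst (unrank y) (unrank x)"
    proof
      assume "lst (unrank y) (unrank x)"
      then have "rk (unrank y) < rk (unrank x)" using xy ranks by (intro rk_mono) (auto intro: unrank_in_Pi)
      moreover have "x \<in> rk ` Pi" "y \<in> rk ` Pi" using xy(1,2) ranks by auto
      ultimately show False using xy(3) by simp
    qed
    moreover have "x = y \<or> lst (unrank x) (unrank y) \<or> lst (unrank y) (unrank x)"
      using chain xy(1,2) by (simp add: is_chain_def)
    ultimately show "lst (unrank x) (unrank y) \<or> unrank x = unrank y" by auto
  qed
  then have "sorted_wrt (\<lambda>a b. lst a b \<or> a = b) (word_of M)"
    by (simp add: word_of_def sorted_wrt_map)
  with word_of_chain(1)[OF chain] show ?thesis by (simp add: std_words_def)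
qed

lemma inj_on_mon: "inj_on mon {K. is_chain K}"
proof (rule inj_onI)
  fix M M' assume "M \<in> {K. is_chain K}" "M' \<in> {K. is_chain K}" "mon M = mon M'"
  then have "word_of M = word_of M'"
    using inj_on_std_words word_of_chain_std unfolding mon_def inj_on_def by blast
  then show "M = M'" using word_of_chain(2) \<open>M \<in> _\<close> \<open>M' \<in> _\<close> by (metis mem_Collect_eq)
qed

lemma independent_chain_mons: "independent (mon ` {K. is_chain K})"
proof -
  have "mon ` {K. is_chain K} \<subseteq> prod_list ` std_words Pi lst"
    unfolding mon_def using word_of_chain_std by blast
  then show ?thesis using independent_std_words independent_mono by blast
qed

lemma span_chain_mons: "span (mon ` {K. is_chain K}) = UNIV"
proof -
  have "upto_chains N \<subseteq> span (mon ` {K. is_chain K})" for N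
    unfolding upto_chains_def by (rule span_mono) blast
  then have "{prod_list w | w. set w \<subseteq> Pi} \<subseteq> span (mon ` {K. is_chain K})"
    using word_in_upto_chains by blast
  then have "span {prod_list w | w. set w \<subseteq> Pi} \<subseteq> span (mon ` {K. is_chain K})"
    by (rule span_minimal) simp
  then show ?thesis using span_words by blast
qed

lemma mon_notin_below_chains:
  assumes chain: "is_chain N"
  shows "mon N \<notin> below_chains N"
proof
  assume "mon N \<in> below_chains N"
  moreover have "mon ` {K. is_chain K \<and> grlex_less K N} \<subseteq> mon ` {K. is_chain K} - {mon N}"
    using inj_on_mon chain grlex_less_irrefl by (auto simp: inj_on_def)
  ultimately have "mon N \<in> span (mon ` {K. is_chain K} - {mon N})"
    unfolding below_chains_def using span_mono by blast
  then show False
    using independent_chain_mons chain unfolding dependent_def by blast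
qed

text \<open>N is the leading chain of x: the largest chain whose standard monomial occurs in the
  expansion of x in the basis of standard monomials.\<close>
definition leading :: "'a \<Rightarrow> nat multiset \<Rightarrow> bool" where
  "leading x N \<longleftrightarrow> is_chain N \<and> (\<exists>c. c \<noteq> 0 \<and> x - sc c (mon N) \<in> below_chains N)"

lemma leading_notin_below_chains:
  assumes "leading x N"
  shows "x \<notin> below_chains N"
proof
  assume x: "x \<in> below_chains N"
  obtain c where c: "is_chain N" "c \<noteq> 0" "x - sc c (mon N) \<in> below_chains N"
    using assms unfolding leading_def by blast
  have "x - (x - sc c (mon N)) \<in> below_chains N"
    using x c(3) unfolding below_chains_def by (rule span_diff)
  then have "sc c (mon N) \<in> below_chains N" by simp
  then have "sc (inverse c) (sc c (mon N)) \<in> below_chains N"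
    unfolding below_chains_def by (rule span_scale)
  with c show False using mon_notin_below_chains by simp
qed

lemma leading_less:
  assumes "leading x N'" and "x \<in> below_chains N"
  shows "grlex_less N' N"
proof (rule ccontr)
  assume "\<not> grlex_less N' N"
  then have "N = N' \<or> grlex_less N N'" using grlex_less_linear by blast
  then have "x \<in> below_chains N'"
    using assms(2) below_chains_subset_upto_chains upto_chains_subset_below_chains by blast
  with assms(1) show False by (simp add: leading_notin_below_chains)
qed

lemma span_chain_mons_upto:
  assumes "x \<in> span (mon ` S)" and "S \<subseteq> {K. is_chain K}"
  shows "x = 0 \<or> (\<exists>K\<in>S. x \<in> upto_chains K)"
  using assms(1)
proof (induction rule: span_induct_alt)
  case base
  then show ?case by simp
next
  case (step c z y)
  then obtain K where K: "K \<in> S" "z = mon K" by blast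
  then have z: "sc c z \<in> upto_chains K'" if "K = K' \<or> grlex_less K K'" for K'
    using assms(2) that unfolding upto_chains_def by (intro span_scale span_base) auto
  show ?case
  proof (cases "y = 0")
    case True
    then show ?thesis using z K by auto
  next
    case False
    then obtain K' where K': "K' \<in> S" "y \<in> upto_chains K'" using step by blast
    show ?thesis
    proof (cases "K = K' \<or> grlex_less K K'")
      case True
      then have "sc c z + y \<in> upto_chains K'"
        using z K' unfolding upto_chains_def by (intro span_add)
      then show ?thesis using K' by blast
    next
      case False
      then have "grlex_less K' K" using grlex_less_linear by blast
      then have "y \<in> upto_chains K"
        using K'(2) below_chains_subset_upto_chains upto_chains_subset_below_chains by blast
      then have "sc c z + y \<in> upto_chains K"
        using z unfolding upto_chains_def by (intro span_add) auto
      then show ?thesis using K by blast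
    qed
  qed
qed

lemma leading_exists:
  assumes "x \<noteq> 0"
  obtains N where "leading x N"
proof -
  have "\<exists>N. leading x N" if "is_chain K" and "x \<in> upto_chains K" for K
    using finite_imageI[OF finite_Pi] that(1)[unfolded is_chain_def, THEN conjunct1] that
  proof (induction K rule: grlex_less_induct)
    case (less K)
    have "mon ` {K'. is_chain K' \<and> (K' = K \<or> grlex_less K' K)} =
        insert (mon K) (mon ` {K'. is_chain K' \<and> grlex_less K' K})"
      using less.prems(1) by auto
    then obtain k where k: "x - sc k (mon K) \<in> below_chains K"
      using less.prems(2) span_breakdown_eq unfolding upto_chains_def below_chains_def by auto
    show ?case
    proof (cases "k = 0")
      case True
      then have "x \<in> span (mon ` {K'. is_chain K' \<and> grlex_less K' K})"
        using k unfolding below_chains_def by simp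
      then obtain K' where "is_chain K'" "grlex_less K' K" "x \<in> upto_chains K'"
        using span_chain_mons_upto[of x] assms by blast
      then show ?thesis using less.IH by (auto simp: is_chain_def)
    next
      case False
      with k less.prems(1) show ?thesis unfolding leading_def by blast
    qed
  qed
  moreover obtain K where "is_chain K" "x \<in> upto_chains K"
    using span_chain_mons_upto[of x "{K. is_chain K}"] span_chain_mons assms by auto
  ultimately show thesis using that by blast
qed

section \<open>Noetherianity\<close>

lemma below_chains_sandwich:
  assumes L: "is_chain L" and R: "is_chain R" and y: "y \<in> below_chains N"
  shows "mon L * y * mon R \<in> below_chains (L + N + R)"
  using y unfolding below_chains_def
proof (rule sandwich_in_span)
  fix s assume "s \<in> mon ` {K. is_chain K \<and> grlex_less K N}"
  then obtain K where K: "s = mon K" "is_chain K" "grlex_less K N" by blast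
  let ?w = "word_of L @ word_of K @ word_of R"
  have "set ?w \<subseteq> Pi" and "ranks ?w = L + K + R"
    using word_of_chain L R K(2) by (simp_all add: ac_simps)
  then have "mon L * s * mon R \<in> upto_chains (L + K + R)"
    using word_in_upto_chains[of ?w] by (simp add: K(1) mon_def mult.assoc)
  also have "\<dots> \<subseteq> below_chains (L + N + R)"
    using K(3) by (intro upto_chains_subset_below_chains grlex_less_add_right grlex_less_add_left)
  finally show "mon L * s * mon R \<in> span (mon ` {K. is_chain K \<and> grlex_less K (L + N + R)})"
    unfolding below_chains_def .
qed

lemma leading_sandwich:
  assumes x: "leading x N" and L: "is_chain L" and R: "is_chain R" and LNR: "is_chain (L + N + R)"
  shows "leading (mon L * x * mon R) (L + N + R)"
proof -
  obtain c where N: "is_chain N" and c: "c \<noteq> 0" "x - sc c (mon N) \<in> below_chains N"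
    using x unfolding leading_def by blast
  let ?w = "word_of L @ word_of N @ word_of R"
  have "set ?w \<subseteq> Pi" and "ranks ?w = L + N + R"
    using word_of_chain L R N by (simp_all add: ac_simps)
  then obtain c' where c': "c' \<noteq> 0" "prod_list ?w - sc c' (mon (L + N + R)) \<in> below_chains (L + N + R)"
    by (metis word_straightening)
  have "mon L * (x - sc c (mon N)) * mon R \<in> below_chains (L + N + R)"
    using L R c(2) by (rule below_chains_sandwich)
  then have "mon L * (x - sc c (mon N)) * mon R + sc c (prod_list ?w - sc c' (mon (L + N + R)))
      \<in> below_chains (L + N + R)"
    using c' unfolding below_chains_def by (intro span_add span_scale)
  moreover have "mon L * (x - sc c (mon N)) * mon R + sc c (prod_list ?w - sc c' (mon (L + N + R))) =
      mon L * x * mon R - sc (c * c') (mon (L + N + R))"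
    by (simp add: mon_def left_diff_distrib right_diff_distrib scale_right_diff_distrib
        scale_mult_left scale_mult_right mult.assoc)
  ultimately show ?thesis using LNR c c' unfolding leading_def by (intro conjI exI[of _ "c * c'"]) auto
qed

definition leading_chains :: "'a set \<Rightarrow> nat multiset set" where
  "leading_chains I = {N. \<exists>x\<in>I. leading x N}"

lemma mem_if_leading_chains_subset:
  assumes I: "subspace I" and J: "subspace J" and "I \<subseteq> J"
    and leading: "leading_chains J \<subseteq> leading_chains I"
    and "x \<in> J" and "leading x N"
  shows "x \<in> I"
proof -
  have "set_mset N \<subseteq> rk ` Pi" using \<open>leading x N\<close> by (simp add: leading_def is_chain_def)
  \<comment> \<open>cancel the leading term of x against an element of I with the same leading chain\<close>
  from finite_imageI[OF finite_Pi, of rk] this \<open>leading x N\<close> \<open>x \<in> J\<close> show ?thesis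
  proof (induction N arbitrary: x rule: grlex_less_induct)
    case (less N)
    then have "N \<in> leading_chains I" using leading unfolding leading_chains_def by blast
    then obtain y where y: "y \<in> I" "leading y N" unfolding leading_chains_def by blast
    obtain c where c: "c \<noteq> 0" "x - sc c (mon N) \<in> below_chains N"
      using less.prems unfolding leading_def by blast
    obtain d where d: "d \<noteq> 0" "y - sc d (mon N) \<in> below_chains N"
      using y(2) unfolding leading_def by blast
    define z where "z = x - sc (c / d) y"
    have "z = (x - sc c (mon N)) - sc (c / d) (y - sc d (mon N))"
      using d(1) by (simp add: z_def scale_right_diff_distrib)
    then have z_below: "z \<in> below_chains N"
      using c d unfolding below_chains_def by (simp add: span_diff span_scale)
    have y_scaled: "sc (c / d) y \<in> I" using I y(1) by (simp add: subspace_scale)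
    then have "z \<in> J" unfolding z_def using J less.prems(2) \<open>I \<subseteq> J\<close> by (blast intro: subspace_diff)
    have "z \<in> I"
    proof (cases "z = 0")
      case True
      then show ?thesis using I by (simp add: subspace_0)
    next
      case False
      then obtain N' where "leading z N'" by (rule leading_exists)
      moreover have "grlex_less N' N" using \<open>leading z N'\<close> z_below by (rule leading_less)
      ultimately show ?thesis using less.IH \<open>z \<in> J\<close> by (auto simp: leading_def is_chain_def)
    qed
    then show "x \<in> I" using y_scaled I unfolding z_def by (metis diff_add_cancel subspace_add)
  qed
qed

lemma subset_if_leading_chains_subset:
  assumes "subspace I" and "subspace J" and "I \<subseteq> J"
    and "leading_chains J \<subseteq> leading_chains I"
  shows "J \<subseteq> I"
proof
  fix x assume "x \<in> J"
  show "x \<in> I"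
  proof (cases "x = 0")
    case True
    then show ?thesis using \<open>subspace I\<close> by (simp add: subspace_0)
  next
    case False
    then obtain N where "leading x N" by (rule leading_exists)
    with assms \<open>x \<in> J\<close> show ?thesis by (rule mem_if_leading_chains_subset)
  qed
qed

lemma ascending_chain_stabilises:
  fixes I :: "nat \<Rightarrow> 'a set"
  assumes subspace: "\<And>n. subspace (I n)" and incr: "\<And>n. I n \<subseteq> I (Suc n)"
    and upward: "\<And>n x N N'. x \<in> I n \<Longrightarrow> leading x N \<Longrightarrow> N \<subseteq># N' \<Longrightarrow> is_chain N' \<Longrightarrow>
      N' \<in> leading_chains (I n)"
  shows "\<exists>m. \<forall>n\<ge>m. I n = I m"
proof (rule ccontr)
  assume "\<not> (\<exists>m. \<forall>n\<ge>m. I n = I m)"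
  then obtain h where h: "\<And>m. h m \<ge> m \<and> I (h m) \<noteq> I m" by metis
  define g where "g k = (h ^^ k) 0" for k
  have I_mono: "m \<le> n \<Longrightarrow> I m \<subseteq> I n" for m n
    using incr by (rule lift_Suc_mono_le)
  have "g n \<le> g (Suc n)" for n using h[of "g n"] by (simp add: g_def)
  then have g_mono: "m \<le> n \<Longrightarrow> g m \<le> g n" for m n
    by (rule lift_Suc_mono_le)
  \<comment> \<open>each strict step of the subsequence acquires a new leading chain\<close>
  have "\<exists>N. N \<in> leading_chains (I (g (Suc k))) \<and> N \<notin> leading_chains (I (g k))" for k
  proof (rule ccontr)
    assume "\<nexists>N. N \<in> leading_chains (I (g (Suc k))) \<and> N \<notin> leading_chains (I (g k))"
    moreover have "I (g k) \<subseteq> I (g (Suc k))" using I_mono g_mono by simp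
    ultimately have "I (g (Suc k)) = I (g k)"
      using subset_if_leading_chains_subset subspace by blast
    then show False using h by (simp add: g_def)
  qed
  then obtain Ns where Ns: "\<And>k. Ns k \<in> leading_chains (I (g (Suc k))) \<and> Ns k \<notin> leading_chains (I (g k))"
    by metis
  have "set_mset (Ns k) \<subseteq> rk ` Pi" for k
    using Ns[of k] by (auto simp: leading_chains_def leading_def is_chain_def)
  then obtain i j where ij: "i < j" "Ns i \<subseteq># Ns j"
    by (rule dickson_multiset[OF finite_imageI[OF finite_Pi]])
  obtain x where x: "x \<in> I (g (Suc i))" "leading x (Ns i)"
    using Ns[of i] by (auto simp: leading_chains_def)
  have "I (g (Suc i)) \<subseteq> I (g j)" using ij(1) g_mono I_mono by simp
  moreover have "is_chain (Ns j)"
    using Ns[of j] by (auto simp: leading_chains_def leading_def)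
  ultimately have "Ns j \<in> leading_chains (I (g j))" using upward x ij(2) by blast
  with Ns[of j] show False by blast
qed

lemma left_ideal_subspace:
  assumes "left_ideal I"
  shows "subspace I"
proof -
  have "sc c x \<in> I" if "x \<in> I" for c x
  proof -
    have "sc c 1 * x \<in> I" using assms that unfolding left_ideal_def by blast
    then show ?thesis by (simp add: scale_mult_left)
  qed
  with assms show ?thesis unfolding left_ideal_def subspace_def by blast
qed

lemma right_ideal_subspace:
  assumes "right_ideal I"
  shows "subspace I"
proof -
  have "sc c x \<in> I" if "x \<in> I" for c x
  proof -
    have "x * sc c 1 \<in> I" using assms that unfolding right_ideal_def by blast
    then show ?thesis by (simp add: scale_mult_right)
  qed
  with assms show ?thesis unfolding right_ideal_def subspace_def by blast
qed

lemma left_ideal_leading_chains_upward: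
  assumes I: "left_ideal I" and x: "x \<in> I" "leading x N" and "N \<subseteq># N'" and chain: "is_chain N'"
  shows "N' \<in> leading_chains I"
proof -
  have N': "(N' - N) + N + {#} = N'" using \<open>N \<subseteq># N'\<close> by simp
  have "is_chain (N' - N)" using chain by (rule is_chain_subset_mset) simp
  then have "leading (mon (N' - N) * x * mon {#}) ((N' - N) + N + {#})"
    using chain N' by (intro leading_sandwich[OF x(2)]) simp_all
  moreover have "mon (N' - N) * x * mon {#} \<in> I" using I x(1) by (simp add: left_ideal_def mon_empty)
  ultimately show ?thesis using N' unfolding leading_chains_def by auto
qed

lemma right_ideal_leading_chains_upward:
  assumes I: "right_ideal I" and x: "x \<in> I" "leading x N" and "N \<subseteq># N'" and chain: "is_chain N'"
  shows "N' \<in> leading_chains I"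
proof -
  have N': "{#} + N + (N' - N) = N'" using \<open>N \<subseteq># N'\<close> by simp
  have "is_chain (N' - N)" using chain by (rule is_chain_subset_mset) simp
  then have "leading (mon {#} * x * mon (N' - N)) ({#} + N + (N' - N))"
    using chain N' by (intro leading_sandwich[OF x(2)]) simp_all
  moreover have "mon {#} * x * mon (N' - N) \<in> I" using I x(1) by (simp add: right_ideal_def mon_empty)
  ultimately show ?thesis using N' unfolding leading_chains_def by auto
qed

theorem ASL_noetherian: "noetherian_ring TYPE('a)"
  unfolding noetherian_ring_def
proof (intro conjI allI impI; elim conjE)
  fix I :: "nat \<Rightarrow> 'a set"
  assume left: "\<forall>n. left_ideal (I n)" and "\<forall>n. I n \<subseteq> I (Suc n)"
  then show "\<exists>m. \<forall>n\<ge>m. I n = I m"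
  proof (intro ascending_chain_stabilises)
    show "subspace (I n)" for n using left by (simp add: left_ideal_subspace)
    show "N' \<in> leading_chains (I n)" if "x \<in> I n" "leading x N" "N \<subseteq># N'" "is_chain N'" for n x N N'
      using left left_ideal_leading_chains_upward[OF _ that] by blast
  qed auto
next
  fix I :: "nat \<Rightarrow> 'a set"
  assume right: "\<forall>n. right_ideal (I n)" and "\<forall>n. I n \<subseteq> I (Suc n)"
  then show "\<exists>m. \<forall>n\<ge>m. I n = I m"
  proof (intro ascending_chain_stabilises)
    show "subspace (I n)" for n using right by (simp add: right_ideal_subspace)
    show "N' \<in> leading_chains (I n)" if "x \<in> I n" "leading x N" "N \<subseteq># N'" "is_chain N'" for n x N N'
      using right right_ideal_leading_chains_upward[OF _ that] by blast
  qed auto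
qed

section \<open>Polynomial growth\<close>

lemma word_homogeneous:
  assumes "set w \<subseteq> Pi"
  shows "\<exists>d\<ge>length w. prod_list w \<in> Agr d"
  using assms
proof (induction w)
  case Nil
  show ?case using one_in_Agr by auto
next
  case (Cons a w)
  then obtain d where "d \<ge> length w" "prod_list w \<in> Agr d" by auto
  moreover obtain e where "e > 0" "a \<in> Agr e" using Cons.prems Pi_homogeneous by auto
  ultimately have "e + d \<ge> length (a # w)" "prod_list (a # w) \<in> Agr (e + d)"
    by (auto intro: mult_in_Agr)
  then show ?case by blast
qed

lemma chain_mon_in_Agr_size_le:
  assumes chain: "is_chain K" and "mon K \<in> Agr n"
  shows "size K \<le> n"
proof -
  obtain d where "d \<ge> size K" "mon K \<in> Agr d"
    using word_homogeneous[OF word_of_chain(1)[OF chain]] by (auto simp: mon_def length_word_of)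
  moreover have "mon K \<noteq> 0"
  proof
    assume "mon K = 0"
    then have "0 \<in> mon ` {K. is_chain K}" using chain by (metis image_eqI mem_Collect_eq)
    then show False using independent_chain_mons by (simp add: dependent_zero)
  qed
  ultimately show ?thesis using homogeneous_degree_unique[OF _ \<open>mon K \<in> Agr n\<close>] by blast
qed

theorem ASL_polynomial_growth: "polynomial_growth sc Agr"
  unfolding polynomial_growth_def
proof (intro exI[of _ "2 ^ card (rk ` Pi) :: real"] exI[of _ "card (rk ` Pi)"] conjI allI impI)
  let ?p = "card (rk ` Pi)"
  show "(0::real) < 2 ^ ?p" by simp
  fix n :: nat assume "1 \<le> n"
  let ?B = "mon ` {K. is_chain K} \<inter> Agr n"
  let ?S = "{M. set_mset M \<subseteq> rk ` Pi \<and> size M \<le> n}"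
  have B_S: "?B \<subseteq> mon ` ?S"
    using chain_mon_in_Agr_size_le by (auto simp: is_chain_def)
  have finite_S: "finite ?S" by (rule finite_msets_size_le[OF finite_imageI[OF finite_Pi]])
  then have finite_B: "finite ?B" by (rule finite_subset[OF B_S finite_imageI])
  have "\<exists>d. b \<in> Agr d" if "b \<in> mon ` {K. is_chain K}" for b
    using that word_homogeneous[OF word_of_chain(1)] by (auto simp: mon_def)
  then have span_B: "Agr n \<subseteq> span ?B" by (rule Agr_subset_span_homogeneous[OF span_chain_mons])
  show "\<exists>B. finite B \<and> B \<subseteq> Agr n \<and> Agr n \<subseteq> span B"
    using finite_B span_B by blast
  have "dim (Agr n) \<le> card ?B" using dim_le_card[OF span_B finite_B] .
  also have "\<dots> \<le> card (mon ` ?S)" using B_S finite_S by (intro card_mono) auto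
  also have "\<dots> \<le> card ?S" using finite_S by (rule card_image_le)
  also have "\<dots> \<le> (n + 1) ^ ?p" by (rule card_msets_size_le[OF finite_imageI[OF finite_Pi]])
  also have "\<dots> \<le> (2 * n) ^ ?p" using \<open>1 \<le> n\<close> by (intro power_mono) auto
  finally have "real (dim (Agr n)) \<le> real ((2 * n) ^ ?p)" by (simp only: of_nat_le_iff)
  then show "real (dim (Agr n)) \<le> 2 ^ ?p * real n ^ ?p" by (simp add: power_mult_distrib)
qed

end

theorem lemma1p2p2:
  fixes sc :: "'k::field \<Rightarrow> 'a::ring_1 \<Rightarrow> 'a"
    and Agr :: "nat \<Rightarrow> 'a set"
    and Pi :: "'a set"
    and lst :: "'a \<Rightarrow> 'a \<Rightarrow> bool"
  assumes "quantum_graded_ASL sc Agr Pi lst"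
  shows "noetherian_ring TYPE('a) \<and> polynomial_growth sc Agr"
proof -
  have "finite Pi" and "\<forall>a\<in>Pi. \<not> lst a a"
    and "\<forall>a\<in>Pi. \<forall>b\<in>Pi. \<forall>c\<in>Pi. lst a b \<and> lst b c \<longrightarrow> lst a c"
    using assms unfolding quantum_graded_ASL_def by blast+
  then obtain rk :: "'a \<Rightarrow> nat"
    where "inj_on rk Pi" and "\<And>a b. a \<in> Pi \<Longrightarrow> b \<in> Pi \<Longrightarrow> lst a b \<Longrightarrow> rk a < rk b"
    by (rule ex_rank_extending) auto
  then interpret ranked_ASL sc Agr Pi lst rk
    using assms by unfold_locales
  show ?thesis using ASL_noetherian ASL_polynomial_growth by blast
qed

end
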